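(* Let $0<p<1/2$, $\delta_1=2\rho(1-\rho)$ and $R_1=\bar R(\delta_1)$. Then \[ -A(\delta_1)-R_1+1-h(\delta_1)=E_0(R_1,p). \]
   Context: Logarithms base 2, $h$ binary entropy, $D(x\|y)=x\log\frac xy+(1-x)\log\frac{1-x}{1-y}$. $\rho=\frac{\sqrt p}{\sqrt p+\sqrt{1-p}}$, $R_{\mathrm{crit}}=1-h(\rho)$, $A(\omega)=\omega\log\big(2\sqrt{p(1-p)}\big)$, and $E_0(R,p)=D(\rho\|p)+R_{\mathrm{crit}}-R$. Further $\tau_\nu(\xi)=\frac12\Big(1-\sqrt{1-4\big(\sqrt{\nu(1-\nu)-\xi(1-\xi)}-\xi\big)^2}\Big)$ and $\bar R(\delta)=1+\min_{\frac12(1-\sqrt{1-2\delta})\le\alpha\le\frac12}\big(h(\tau_\alpha(\delta/2))-h(\alpha)\big)$ (the inverse of the linear programming bound on relative distance). *)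

theory Defs
  imports "HOL-Analysis.Analysis"
begin

text \<open>All logarithms are base 2. Convention 0 log 0 = 0 holds automatically since log 2 0 = 0.\<close>

definition bin_entropy :: "real \<Rightarrow> real" where
  "bin_entropy x = - x * log 2 x - (1 - x) * log 2 (1 - x)"

definition kl_div :: "real \<Rightarrow> real \<Rightarrow> real" where
  "kl_div x y = x * log 2 (x / y) + (1 - x) * log 2 ((1 - x) / (1 - y))"

definition rho :: "real \<Rightarrow> real" where
  "rho p = sqrt p / (sqrt p + sqrt (1 - p))"

definition R_crit :: "real \<Rightarrow> real" where
  "R_crit p = 1 - bin_entropy (rho p)"

definition A_fun :: "real \<Rightarrow> real \<Rightarrow> real" where
  "A_fun p \<omega> = \<omega> * log 2 (2 * sqrt (p * (1 - p)))"

definition E0 :: "real \<Rightarrow> real \<Rightarrow> real" where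
  "E0 R p = kl_div (rho p) p + R_crit p - R"

definition tau :: "real \<Rightarrow> real \<Rightarrow> real" where
  "tau \<nu> \<xi> = (1 - sqrt (1 - 4 * (sqrt (\<nu> * (1 - \<nu>) - \<xi> * (1 - \<xi>)) - \<xi>)^2)) / 2"

text \<open>Inverse of the linear programming bound; the minimum over the compact interval
  is rendered as the infimum (it is attained by continuity).\<close>
definition R_bar :: "real \<Rightarrow> real" where
  "R_bar \<delta> = 1 + (INF \<alpha>\<in>{(1 - sqrt (1 - 2 * \<delta>)) / 2 .. 1/2}.
                      bin_entropy (tau \<alpha> (\<delta> / 2)) - bin_entropy \<alpha>)"

end

theory Submission
  imports Defs
begin

text \<open>The rate \<open>R1\<close> occurs on both sides and cancels, so the claim is the identity
  \<open>-A(\<delta>1) - h(\<delta>1) = D(\<rho>\<parallel>p) - h(\<rho>)\<close>. With \<open>s = \<surd>p + \<surd>(1-p)\<close> one has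
  \<open>\<rho> = \<surd>p/s\<close> and \<open>1 - \<rho> = \<surd>(1-p)/s\<close>, hence \<open>\<rho>\<^sup>2/p = (1-\<rho>)\<^sup>2/(1-p) = 1/s\<^sup>2\<close> and
  \<open>\<delta>1/(2\<surd>(p(1-p))) = 1 - \<delta>1 = 1/s\<^sup>2\<close>. Both sides are convex combinations of
  logarithms of these ratios, so both equal \<open>log (1/s\<^sup>2)\<close>.\<close>

lemma kl_div_minus_bin_entropy:
  fixes x y :: real
  assumes "0 < x" "x < 1" "0 < y" "y < 1"
  shows "kl_div x y - bin_entropy x
           = x * log 2 (x\<^sup>2 / y) + (1 - x) * log 2 ((1 - x)\<^sup>2 / (1 - y))"
proof -
  have "log 2 (x\<^sup>2 / y) = log 2 (x / y) + log 2 x"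
    using assms by (simp add: log_divide log_nat_power)
  moreover have "log 2 ((1 - x)\<^sup>2 / (1 - y)) = log 2 ((1 - x) / (1 - y)) + log 2 (1 - x)"
    using assms by (simp add: log_divide log_nat_power)
  ultimately show ?thesis
    by (simp add: kl_div_def bin_entropy_def algebra_simps)
qed

lemma neg_A_fun_minus_bin_entropy:
  fixes p \<delta> :: real
  assumes "0 < p" "p < 1" "0 < \<delta>"
  shows "- A_fun p \<delta> - bin_entropy \<delta>
           = \<delta> * log 2 (\<delta> / (2 * sqrt (p * (1 - p)))) + (1 - \<delta>) * log 2 (1 - \<delta>)"
proof -
  have "\<delta> * log 2 (\<delta> / (2 * sqrt (p * (1 - p))))
          = \<delta> * log 2 \<delta> - \<delta> * log 2 (2 * sqrt (p * (1 - p)))"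
    using assms by (simp add: log_divide right_diff_distrib)
  then show ?thesis
    unfolding A_fun_def bin_entropy_def by linarith
qed

context
  fixes p :: real
  assumes p_pos: "0 < p" and p_less_1: "p < 1"
begin

private abbreviation "s \<equiv> sqrt p + sqrt (1 - p)"

private lemma s_pos: "0 < s"
  using p_pos p_less_1 by (simp add: add_pos_nonneg)

private lemma s_squared: "s\<^sup>2 = 1 + 2 * sqrt (p * (1 - p))"
  using p_pos p_less_1 by (simp add: power2_sum real_sqrt_mult)

lemma rho_eq: "rho p = sqrt p / s"
  by (simp add: rho_def)

lemma one_minus_rho_eq: "1 - rho p = sqrt (1 - p) / s"
  using s_pos by (simp add: rho_def field_simps)

lemma rho_pos: "0 < rho p"
  using p_pos s_pos by (simp add: rho_eq)

lemma rho_less_1: "rho p < 1"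
proof -
  have "0 < 1 - rho p"
    unfolding one_minus_rho_eq using p_less_1 s_pos by simp
  then show ?thesis by simp
qed

lemma rho_squared_div: "(rho p)\<^sup>2 / p = 1 / s\<^sup>2"
  using p_pos by (simp add: rho_eq power_divide)

lemma one_minus_rho_squared_div: "(1 - rho p)\<^sup>2 / (1 - p) = 1 / s\<^sup>2"
  using p_less_1 by (simp add: one_minus_rho_eq power_divide)

lemma two_rho_one_minus_rho_eq: "2 * rho p * (1 - rho p) = 2 * sqrt (p * (1 - p)) / s\<^sup>2"
  unfolding one_minus_rho_eq by (simp add: rho_eq power2_eq_square real_sqrt_mult)

lemma two_rho_one_minus_rho_div: "2 * rho p * (1 - rho p) / (2 * sqrt (p * (1 - p))) = 1 / s\<^sup>2"
  using p_pos p_less_1 by (simp add: two_rho_one_minus_rho_eq)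

lemma one_minus_two_rho_one_minus_rho: "1 - 2 * rho p * (1 - rho p) = 1 / s\<^sup>2"
proof -
  have "0 < s\<^sup>2"
    using s_pos by simp
  then have "1 - 2 * sqrt (p * (1 - p)) / s\<^sup>2 = (s\<^sup>2 - 2 * sqrt (p * (1 - p))) / s\<^sup>2"
    by (simp add: diff_divide_distrib)
  then show ?thesis
    unfolding two_rho_one_minus_rho_eq by (simp add: s_squared)
qed

lemma kl_div_rho_minus_bin_entropy: "kl_div (rho p) p - bin_entropy (rho p) = log 2 (1 / s\<^sup>2)"
  unfolding kl_div_minus_bin_entropy[OF rho_pos rho_less_1 p_pos p_less_1]
    rho_squared_div one_minus_rho_squared_div
  by (simp add: algebra_simps)

lemma neg_A_fun_minus_bin_entropy_rho:
  "- A_fun p (2 * rho p * (1 - rho p)) - bin_entropy (2 * rho p * (1 - rho p)) = log 2 (1 / s\<^sup>2)"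
proof -
  have \<delta>_pos: "0 < 2 * rho p * (1 - rho p)"
    using rho_pos rho_less_1 by simp
  have log_one_minus_\<delta>: "log 2 (1 - 2 * rho p * (1 - rho p)) = log 2 (1 / s\<^sup>2)"
    by (simp only: one_minus_two_rho_one_minus_rho)
  show ?thesis
    unfolding neg_A_fun_minus_bin_entropy[OF p_pos p_less_1 \<delta>_pos]
      two_rho_one_minus_rho_div log_one_minus_\<delta>
    by (simp add: algebra_simps)
qed

end

theorem lemma16:
  fixes p :: real
  assumes "0 < p" and "p < 1/2"
  defines "\<delta>1 \<equiv> 2 * rho p * (1 - rho p)"
  defines "R1 \<equiv> R_bar \<delta>1"
  shows "- A_fun p \<delta>1 - R1 + 1 - bin_entropy \<delta>1 = E0 R1 p"
proof -
  have "- A_fun p \<delta>1 - bin_entropy \<delta>1 = kl_div (rho p) p - bin_entropy (rho p)"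
    using assms unfolding \<delta>1_def
    by (simp add: neg_A_fun_minus_bin_entropy_rho kl_div_rho_minus_bin_entropy)
  then show ?thesis
    by (simp add: E0_def R_crit_def)
qed

end
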